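(* Let $L\subseteq B_i$ be an SINR-feasible set of links contained in a single bucket $B_i$. Then there is a constant $C$ depending only on $\alpha,\beta,\varepsilon$ such that for every $e\in B_i$, \[\sum_{\{e'\in L:d_{e'}\ge d_e\}}\bar a_e(e')\le C.\]
   Context: Constants: $\alpha\ge0$, $N>0$, $\beta>0$. Nodes lie in the Euclidean plane. A link is $e=(s_e,r_e,P_e)$ with transmitter, receiver, power $P_e>0$; $\mathcal{L}$ is the set of links. $d_e=d(s_e,r_e)$, $d_{e'e}=d(s_{e'},r_e)$, $S_e=P_e/d_e^\alpha$, $S_{e'e}=P_{e'}/d_{e'e}^\alpha$, $\gamma_e=\beta S_e/(S_e-\beta N)$. Affectances: $\hat a_{e'}(e)=S_{e'e}/S_e$, $a_{e'}(e)=\gamma_e\hat a_{e'}(e)$, $\bar a_{e'}(e)=\min\{1,a_{e'}(e)\}$. $L$ is SINR-feasible if $S_e/(N+\sum_{e'\in L\setminus\{e\}}S_{e'e})\ge\beta$ for all $e\in L$. Buckets: $S_{\min}=\min_{e\in\mathcal{L}}S_e$, $B_i=\{e\in\mathcal{L}:2^iS_{\min}\le S_e<2^{i+1}S_{\min}\}$. Standing assumption: there is a constant $\varepsilon>0$ with $S_e/N\ge(1+\varepsilon)\beta$ for all $e\in\mathcal{L}$. *)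

theory Defs
  imports "HOL-Analysis.Analysis"
begin

type_synonym point = "real ^ 2"
type_synonym link = "point \<times> point \<times> real"

definition sndr :: "link \<Rightarrow> point" where "sndr e = fst e"
definition rcvr :: "link \<Rightarrow> point" where "rcvr e = fst (snd e)"
definition pw :: "link \<Rightarrow> real" where "pw e = snd (snd e)"

definition dlen :: "link \<Rightarrow> real" where "dlen e = dist (sndr e) (rcvr e)"

definition dcross :: "link \<Rightarrow> link \<Rightarrow> real" where
  "dcross e' e = dist (sndr e') (rcvr e)"

definition sig :: "real \<Rightarrow> link \<Rightarrow> real" where
  "sig \<alpha> e = pw e / (dlen e powr \<alpha>)"

definition sigx :: "real \<Rightarrow> link \<Rightarrow> link \<Rightarrow> real" where
  "sigx \<alpha> e' e = pw e' / (dcross e' e powr \<alpha>)"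

definition gam :: "real \<Rightarrow> real \<Rightarrow> real \<Rightarrow> link \<Rightarrow> real" where
  "gam \<alpha> N \<beta> e = \<beta> * sig \<alpha> e / (sig \<alpha> e - \<beta> * N)"

definition ahat :: "real \<Rightarrow> link \<Rightarrow> link \<Rightarrow> real" where
  "ahat \<alpha> e' e = sigx \<alpha> e' e / sig \<alpha> e"

definition aff :: "real \<Rightarrow> real \<Rightarrow> real \<Rightarrow> link \<Rightarrow> link \<Rightarrow> real" where
  "aff \<alpha> N \<beta> e' e = gam \<alpha> N \<beta> e * ahat \<alpha> e' e"

text \<open>bar a_{e'}(e) = min 1 (a_{e'}(e)); if s_{e'} = r_e the affectance is infinite,
  so the truncated affectance is 1.\<close>
definition abar :: "real \<Rightarrow> real \<Rightarrow> real \<Rightarrow> link \<Rightarrow> link \<Rightarrow> real" where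
  "abar \<alpha> N \<beta> e' e = (if dcross e' e = 0 then 1 else min 1 (aff \<alpha> N \<beta> e' e))"

text \<open>SINR-feasibility; infinite interference (s_{e'} = r_e) makes a set infeasible.\<close>
definition sinr_feasible :: "real \<Rightarrow> real \<Rightarrow> real \<Rightarrow> link set \<Rightarrow> bool" where
  "sinr_feasible \<alpha> N \<beta> L \<longleftrightarrow>
     (\<forall>e\<in>L. (\<forall>e'\<in>L - {e}. dcross e' e > 0) \<and>
             sig \<alpha> e / (N + (\<Sum>e'\<in>L - {e}. sigx \<alpha> e' e)) \<ge> \<beta>)"

definition Smin :: "real \<Rightarrow> link set \<Rightarrow> real" where
  "Smin \<alpha> Ls = Min (sig \<alpha> ` Ls)"

definition bucket :: "real \<Rightarrow> link set \<Rightarrow> nat \<Rightarrow> link set" where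
  "bucket \<alpha> Ls i = {e \<in> Ls. 2 ^ i * Smin \<alpha> Ls \<le> sig \<alpha> e \<and> sig \<alpha> e < 2 ^ (i + 1) * Smin \<alpha> Ls}"

end

theory Submission
  imports Defs
begin

text \<open>Within a bucket all signal strengths agree up to a factor 2, so the truncated affectance of
  e on a link f is at most a constant times the proximity factor min 1 ((d_e / d(s_e, r_f))^\<alpha>).
  Let e0 be the link of the sum whose receiver is closest to s_e.  By the triangle inequality every
  other long link f of the sum has d(s_f, r_e0) \<le> d_f + 2 d(s_e, r_f), so f interferes with e0 at
  least a constant times its proximity factor times S_e0.  Feasibility at e0 bounds the total
  interference by S_e0 / \<beta>, which bounds the sum of the proximity factors.\<close>

definition proximity :: "real \<Rightarrow> real \<Rightarrow> real \<Rightarrow> real" where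
  "proximity \<alpha> d D = (if D = 0 then 1 else min 1 ((d / D) powr \<alpha>))"

lemma proximity_le_one: "proximity \<alpha> d D \<le> 1"
  by (simp add: proximity_def)

lemma proximity_nonneg: "proximity \<alpha> d D \<ge> 0"
  by (simp add: proximity_def)

lemma powr_ratio_ge_proximity:
  fixes a d D \<alpha> :: real
  assumes "d > 0" "a \<ge> d" "D \<ge> 0" "\<alpha> \<ge> 0"
  shows "(a / (a + 2 * D)) powr \<alpha> \<ge> (1/3) powr \<alpha> * proximity \<alpha> d D"
proof (cases "D \<le> a")
  case True
  have "1/3 \<le> a / (a + 2 * D)" using True assms by (simp add: field_simps)
  hence "(1/3) powr \<alpha> \<le> (a / (a + 2 * D)) powr \<alpha>" using assms by (intro powr_mono2) auto
  moreover have "(1/3) powr \<alpha> * proximity \<alpha> d D \<le> (1/3) powr \<alpha>"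
    using proximity_le_one[of \<alpha> d D] by (simp add: mult_left_le)
  ultimately show ?thesis by linarith
next
  case False
  hence D: "D > 0" using assms by linarith
  have "d / (3 * D) \<le> a / (3 * D)" using assms D by (intro divide_right_mono) auto
  also have "\<dots> \<le> a / (a + 2 * D)" using assms D False by (intro divide_left_mono) auto
  finally have "(d / (3 * D)) powr \<alpha> \<le> (a / (a + 2 * D)) powr \<alpha>"
    using assms D by (intro powr_mono2) auto
  moreover have "(d / (3 * D)) powr \<alpha> = (1/3) powr \<alpha> * (d / D) powr \<alpha>"
    using assms D by (simp add: powr_mult[symmetric])
  moreover have "proximity \<alpha> d D \<le> (d / D) powr \<alpha>" using D by (simp add: proximity_def)
  ultimately show ?thesis by (smt (verit) mult_left_mono powr_ge_zero)
qed

lemma signal_ge_proximity: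
  fixes a d D Z p \<alpha> :: real
  assumes "d > 0" "a \<ge> d" "D \<ge> 0" "\<alpha> \<ge> 0" "Z > 0" "Z \<le> a + 2 * D" "p > 0"
  shows "p / a powr \<alpha> * ((1/3) powr \<alpha> * proximity \<alpha> d D) \<le> p / Z powr \<alpha>"
proof -
  have a: "a > 0" using assms by linarith
  have "(a / (a + 2 * D)) powr \<alpha> \<le> (a / Z) powr \<alpha>"
    using assms a by (intro powr_mono2) (auto intro!: divide_left_mono)
  with powr_ratio_ge_proximity[OF assms(1-4)]
  have "(1/3) powr \<alpha> * proximity \<alpha> d D \<le> (a / Z) powr \<alpha>" by linarith
  hence "p / a powr \<alpha> * ((1/3) powr \<alpha> * proximity \<alpha> d D) \<le> p / a powr \<alpha> * (a / Z) powr \<alpha>"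
    using assms a by (intro mult_left_mono) auto
  also have "\<dots> = p / Z powr \<alpha>" using a assms by (simp add: powr_divide)
  finally show ?thesis .
qed

lemma min_one_mult_le:
  fixes K K' x :: real
  assumes "K \<ge> 1" "K \<ge> K'" "K' \<ge> 0" "x \<ge> 0"
  shows "min 1 (K' * x) \<le> K * min 1 x"
proof (cases "x \<le> 1")
  case True
  then show ?thesis using assms by (simp add: min_def) (smt (verit) mult_right_mono)
next
  case False
  then show ?thesis using assms by (simp add: min_def)
qed

lemma gam_bounds:
  assumes "\<beta> > 0" "\<epsilon> > 0" "N > 0" "sig \<alpha> f / N \<ge> (1 + \<epsilon>) * \<beta>"
  shows "0 \<le> gam \<alpha> N \<beta> f" and "gam \<alpha> N \<beta> f \<le> \<beta> * (1 + \<epsilon>) / \<epsilon>"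
proof -
  have s: "sig \<alpha> f \<ge> (1 + \<epsilon>) * \<beta> * N" using assms by (simp add: field_simps)
  have "\<epsilon> * \<beta> * N > 0" using assms by simp
  hence den: "sig \<alpha> f - \<beta> * N > 0" using s by (simp add: algebra_simps)
  moreover have "\<beta> * N > 0" using assms by simp
  ultimately have "sig \<alpha> f > 0" by linarith
  then show "0 \<le> gam \<alpha> N \<beta> f"
    unfolding gam_def using den assms by (intro divide_nonneg_pos mult_nonneg_nonneg) auto
  have "\<epsilon> * sig \<alpha> f \<le> (1 + \<epsilon>) * (sig \<alpha> f - \<beta> * N)" using s by (simp add: algebra_simps)
  hence "sig \<alpha> f / (sig \<alpha> f - \<beta> * N) \<le> (1 + \<epsilon>) / \<epsilon>"
    using den assms by (simp add: divide_simps mult.commute)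
  hence "\<beta> * (sig \<alpha> f / (sig \<alpha> f - \<beta> * N)) \<le> \<beta> * ((1 + \<epsilon>) / \<epsilon>)"
    using assms by (intro mult_left_mono) auto
  thus "gam \<alpha> N \<beta> f \<le> \<beta> * (1 + \<epsilon>) / \<epsilon>" unfolding gam_def by simp
qed

lemma abar_le_proximity:
  assumes "pw e > 0" "dlen e > 0" "\<beta> > 0" "\<epsilon> > 0" "N > 0"
    and "sig \<alpha> e \<le> 2 * sig \<alpha> f" "sig \<alpha> f / N \<ge> (1 + \<epsilon>) * \<beta>"
  shows "abar \<alpha> N \<beta> e f \<le> max 1 (2 * \<beta> * (1 + \<epsilon>) / \<epsilon>) * proximity \<alpha> (dlen e) (dcross e f)"
proof (cases "dcross e f = 0")
  case True
  then show ?thesis by (simp add: abar_def proximity_def)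
next
  case False
  define x where "x = (dlen e / dcross e f) powr \<alpha>"
  have x: "x \<ge> 0" unfolding x_def by simp
  have "(1 + \<epsilon>) * \<beta> > 0" using assms by simp
  hence sf: "sig \<alpha> f > 0" using assms(5,7) by (smt (verit) divide_nonpos_pos)
  have "sigx \<alpha> e f = sig \<alpha> e * x"
    using assms False unfolding sigx_def sig_def x_def dcross_def by (simp add: powr_divide)
  hence "ahat \<alpha> e f = sig \<alpha> e * x / sig \<alpha> f" unfolding ahat_def by simp
  also have "\<dots> \<le> 2 * sig \<alpha> f * x / sig \<alpha> f"
    using assms x sf by (intro divide_right_mono mult_right_mono) auto
  finally have "ahat \<alpha> e f \<le> 2 * x" using sf by simp
  moreover have "ahat \<alpha> e f \<ge> 0" unfolding ahat_def sigx_def using assms sf by simp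
  ultimately have "aff \<alpha> N \<beta> e f \<le> (\<beta> * (1 + \<epsilon>) / \<epsilon>) * (2 * x)"
    unfolding aff_def using gam_bounds[OF assms(3-5,7)] by (intro mult_mono) auto
  hence "min 1 (aff \<alpha> N \<beta> e f) \<le> min 1 ((2 * \<beta> * (1 + \<epsilon>) / \<epsilon>) * x)"
    by (simp add: min_def algebra_simps)
  also have "\<dots> \<le> max 1 (2 * \<beta> * (1 + \<epsilon>) / \<epsilon>) * min 1 x"
    using assms x by (intro min_one_mult_le) auto
  finally show ?thesis using False unfolding abar_def proximity_def x_def by simp
qed

lemma dcross_le_via_sender:
  assumes "dcross e e0 \<le> dcross e f"
  shows "dcross f e0 \<le> dlen f + 2 * dcross e f"
proof -
  have "dist (sndr f) (rcvr e0) \<le> dist (sndr f) (rcvr f) + dist (rcvr f) (rcvr e0)"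
    by (rule dist_triangle)
  moreover have "dist (rcvr f) (rcvr e0) \<le> dist (sndr e) (rcvr f) + dist (sndr e) (rcvr e0)"
    by (rule dist_triangle3)
  ultimately show ?thesis using assms unfolding dcross_def dlen_def by linarith
qed

lemma sigx_ge_proximity:
  assumes "\<alpha> \<ge> 0" "pw f > 0" "dlen e > 0" "dlen f \<ge> dlen e"
    and "dcross e e0 \<le> dcross e f" "dcross f e0 > 0"
  shows "sig \<alpha> f * ((1/3) powr \<alpha> * proximity \<alpha> (dlen e) (dcross e f)) \<le> sigx \<alpha> f e0"
  unfolding sig_def sigx_def
  using assms dcross_le_via_sender[OF assms(5)]
  by (intro signal_ge_proximity) (auto simp: dcross_def)

lemma sig_le_double_in_bucket:
  assumes "e \<in> bucket \<alpha> Ls i" "f \<in> bucket \<alpha> Ls i"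
  shows "sig \<alpha> e \<le> 2 * sig \<alpha> f"
proof -
  have "sig \<alpha> e < 2 * (2 ^ i * Smin \<alpha> Ls)" "2 ^ i * Smin \<alpha> Ls \<le> sig \<alpha> f"
    using assms unfolding bucket_def by auto
  then show ?thesis by linarith
qed

lemma sinr_feasible_interference_le:
  assumes "sinr_feasible \<alpha> N \<beta> L" "e \<in> L" "N > 0" "\<beta> > 0" "\<forall>f\<in>L. pw f > 0"
  shows "\<beta> * (\<Sum>f\<in>L - {e}. sigx \<alpha> f e) \<le> sig \<alpha> e"
proof -
  define S where "S = (\<Sum>f\<in>L - {e}. sigx \<alpha> f e)"
  have "S \<ge> 0" unfolding S_def sigx_def using assms(5) by (intro sum_nonneg) auto
  moreover have "sig \<alpha> e / (N + S) \<ge> \<beta>"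
    using assms(1,2) unfolding sinr_feasible_def S_def by auto
  ultimately have "\<beta> * (N + S) \<le> sig \<alpha> e" using assms(3) by (simp add: field_simps)
  then show ?thesis using assms(3,4) unfolding S_def by (smt (verit) mult_pos_pos distrib_left)
qed

lemma sum_proximity_le:
  assumes feas: "sinr_feasible \<alpha> N \<beta> L" and fin: "finite L" and TL: "T \<subseteq> L"
    and "\<alpha> \<ge> 0" "\<beta> > 0" "N > 0" "dlen e > 0"
    and pos: "\<forall>f\<in>L. pw f > 0 \<and> sig \<alpha> f > 0"
    and long: "\<forall>f\<in>T. dlen f \<ge> dlen e"
    and ratio: "\<forall>f\<in>L. \<forall>g\<in>L. sig \<alpha> f \<le> 2 * sig \<alpha> g"
  shows "(\<Sum>f\<in>T. proximity \<alpha> (dlen e) (dcross e f)) \<le> 1 + 2 / (\<beta> * (1/3) powr \<alpha>)"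
proof (cases "T = {}")
  case True
  then show ?thesis using assms by simp
next
  case False
  define c where "c = (1/3 :: real) powr \<alpha>"
  define m where "m f = proximity \<alpha> (dlen e) (dcross e f)" for f
  have finT: "finite T" using fin TL by (rule finite_subset[rotated])
  obtain e0 where e0: "e0 \<in> T" and closest: "\<forall>f\<in>T. dcross e e0 \<le> dcross e f"
    using arg_min_if_finite[OF finT False, of "dcross e"] by (metis not_less)
  have e0L: "e0 \<in> L" using e0 TL by auto
  define M where "M = (\<Sum>f\<in>T - {e0}. m f)"
  have "sig \<alpha> e0 / 2 * (c * m f) \<le> sigx \<alpha> f e0" if f: "f \<in> T - {e0}" for f
  proof -
    have "dcross f e0 > 0" using feas e0L f TL unfolding sinr_feasible_def by auto
    hence "sig \<alpha> f * (c * m f) \<le> sigx \<alpha> f e0"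
      unfolding c_def m_def using assms f closest TL by (intro sigx_ge_proximity) auto
    moreover have "sig \<alpha> e0 / 2 \<le> sig \<alpha> f" using ratio e0L f TL by fastforce
    moreover have "c * m f \<ge> 0" unfolding c_def m_def by (simp add: proximity_nonneg)
    ultimately show ?thesis by (smt (verit) mult_right_mono)
  qed
  hence "(\<Sum>f\<in>T - {e0}. sig \<alpha> e0 / 2 * (c * m f)) \<le> (\<Sum>f\<in>T - {e0}. sigx \<alpha> f e0)"
    by (rule sum_mono)
  also have "\<dots> \<le> (\<Sum>f\<in>L - {e0}. sigx \<alpha> f e0)"
    using fin TL pos by (intro sum_mono2) (auto simp: sigx_def)
  also have "(\<Sum>f\<in>T - {e0}. sig \<alpha> e0 / 2 * (c * m f)) = sig \<alpha> e0 / 2 * c * M"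
    unfolding M_def by (simp add: sum_distrib_left mult.assoc)
  finally have "\<beta> * (sig \<alpha> e0 / 2 * c * M) \<le> \<beta> * (\<Sum>f\<in>L - {e0}. sigx \<alpha> f e0)"
    using \<open>\<beta> > 0\<close> by simp
  also have "\<dots> \<le> sig \<alpha> e0 * 1"
    using sinr_feasible_interference_le[OF feas e0L] assms by simp
  finally have "sig \<alpha> e0 * (\<beta> * c / 2 * M) \<le> sig \<alpha> e0 * 1"
    by (simp add: mult_ac)
  hence "\<beta> * c / 2 * M \<le> 1" using pos e0L by (simp add: mult_le_cancel_left_pos)
  moreover have "\<beta> * c > 0" unfolding c_def using assms by simp
  ultimately have "M \<le> 2 / (\<beta> * c)" by (simp add: field_simps)
  moreover have "(\<Sum>f\<in>T. m f) = m e0 + M"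
    using finT e0 unfolding M_def by (simp add: sum.remove)
  moreover have "m e0 \<le> 1" unfolding m_def by (rule proximity_le_one)
  ultimately show ?thesis unfolding m_def c_def by linarith
qed

theorem theorem2:
  fixes \<alpha> \<beta> \<epsilon> :: real
  assumes "\<alpha> \<ge> 0" and "\<beta> > 0" and "\<epsilon> > 0"
  shows "\<exists>C::real. \<forall>(N::real) (Ls::link set) (L::link set) (i::nat) (e::link).
           N > 0 \<and> finite Ls \<and>
           (\<forall>f\<in>Ls. pw f > 0 \<and> dlen f > 0 \<and> sig \<alpha> f / N \<ge> (1 + \<epsilon>) * \<beta>) \<and>
           L \<subseteq> bucket \<alpha> Ls i \<and> sinr_feasible \<alpha> N \<beta> L \<and> e \<in> bucket \<alpha> Ls i
           \<longrightarrow> (\<Sum>e'\<in>{e'\<in>L. dlen e' \<ge> dlen e}. abar \<alpha> N \<beta> e e') \<le> C"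
proof (intro exI allI impI, elim conjE)
  define K where "K = max 1 (2 * \<beta> * (1 + \<epsilon>) / \<epsilon>)"
  fix N Ls L i e
  assume N: "N > 0" and fin: "finite Ls"
    and Ls: "\<forall>f\<in>Ls. pw f > 0 \<and> dlen f > 0 \<and> sig \<alpha> f / N \<ge> (1 + \<epsilon>) * \<beta>"
    and LB: "L \<subseteq> bucket \<alpha> Ls i" and feas: "sinr_feasible \<alpha> N \<beta> L" and eB: "e \<in> bucket \<alpha> Ls i"
  define T where "T = {f\<in>L. dlen f \<ge> dlen e}"
  have B: "bucket \<alpha> Ls i \<subseteq> Ls" unfolding bucket_def by auto
  have "(1 + \<epsilon>) * \<beta> > 0" using assms by simp
  hence sig_pos: "\<forall>f\<in>Ls. sig \<alpha> f > 0" using Ls N by (smt (verit) divide_nonpos_pos)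
  have "(\<Sum>f\<in>T. abar \<alpha> N \<beta> e f) \<le> (\<Sum>f\<in>T. K * proximity \<alpha> (dlen e) (dcross e f))"
    unfolding K_def T_def using assms N Ls LB B eB
    by (intro sum_mono abar_le_proximity sig_le_double_in_bucket) auto
  also have "\<dots> = K * (\<Sum>f\<in>T. proximity \<alpha> (dlen e) (dcross e f))"
    by (simp add: sum_distrib_left)
  also have "\<dots> \<le> K * (1 + 2 / (\<beta> * (1/3) powr \<alpha>))"
  proof (rule mult_left_mono)
    have "finite L" using LB B fin by (meson finite_subset)
    then show "(\<Sum>f\<in>T. proximity \<alpha> (dlen e) (dcross e f)) \<le> 1 + 2 / (\<beta> * (1/3) powr \<alpha>)"
      unfolding T_def using assms N Ls LB B eB sig_pos
      by (intro sum_proximity_le[OF feas]) (auto intro: sig_le_double_in_bucket)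
  qed (simp add: K_def)
  finally show "(\<Sum>f\<in>{f\<in>L. dlen f \<ge> dlen e}. abar \<alpha> N \<beta> e f) \<le> K * (1 + 2 / (\<beta> * (1/3) powr \<alpha>))"
    unfolding T_def .
qed

end
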